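(* Let $B$, $C$ be unital $\mathrm{C}^*$-algebras and let $\phi,\psi\colon B\to C$ be surjective $*$-homomorphisms. Assume that $C$ has trivial center. If $c\in C$ satisfies $\phi(b)c=c\psi(b)$ for all $b\in B$, then either $c$ is invertible or $c=0$. *)

theory Defs
  imports Complex_Main
begin

class scaleC =
  fixes scaleC :: "complex \<Rightarrow> 'a \<Rightarrow> 'a"

class cstar_op =
  fixes cstar :: "'a \<Rightarrow> 'a"

class cstar_algebra = real_normed_algebra_1 + banach + scaleC + cstar_op +
  assumes scaleC_add_right: "scaleC a (x + y) = scaleC a x + scaleC a y"
    and scaleC_add_left: "scaleC (a + b) x = scaleC a x + scaleC b x"
    and scaleC_scaleC: "scaleC a (scaleC b x) = scaleC (a * b) x"
    and scaleC_one: "scaleC 1 x = x"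
    and scaleR_scaleC: "scaleR r x = scaleC (complex_of_real r) x"
    and norm_scaleC: "norm (scaleC a x) = cmod a * norm x"
    and mult_scaleC_left: "scaleC a x * y = scaleC a (x * y)"
    and mult_scaleC_right: "x * scaleC a y = scaleC a (x * y)"
    and cstar_cstar: "cstar (cstar x) = x"
    and cstar_add: "cstar (x + y) = cstar x + cstar y"
    and cstar_scaleC: "cstar (scaleC a x) = scaleC (cnj a) (cstar x)"
    and cstar_mult: "cstar (x * y) = cstar y * cstar x"
    and cstar_identity: "norm (cstar x * x) = norm x * norm x"

definition star_hom :: "('a::cstar_algebra \<Rightarrow> 'b::cstar_algebra) \<Rightarrow> bool" where
  "star_hom f \<longleftrightarrow>
     (\<forall>x y. f (x + y) = f x + f y) \<and>
     (\<forall>a x. f (scaleC a x) = scaleC a (f x)) \<and>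
     (\<forall>x y. f (x * y) = f x * f y) \<and>
     (\<forall>x. f (cstar x) = cstar (f x))"

definition center :: "'a::cstar_algebra set" where
  "center = {z. \<forall>x. z * x = x * z}"

definition trivial_center :: "'a::cstar_algebra itself \<Rightarrow> bool" where
  "trivial_center _ \<longleftrightarrow> (center :: 'a set) = {scaleC a 1 | a. True}"

definition invertible_elem :: "'a::cstar_algebra \<Rightarrow> bool" where
  "invertible_elem c \<longleftrightarrow> (\<exists>d. c * d = 1 \<and> d * c = 1)"

end

theory Submission
  imports Defs
begin

text \<open>If \<open>c\<close> intertwines \<open>\<phi>\<close> and \<open>\<psi>\<close>, then so does \<open>c\<^sup>*\<close> in the opposite direction.
  Hence \<open>c\<^sup>*c\<close> and \<open>cc\<^sup>*\<close> commute with every \<open>\<psi> b\<close>, resp. every \<open>\<phi> b\<close>, so by surjectivity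
  they are central, i.e. scalars. By the C*-identity these scalars are nonzero when \<open>c \<noteq> 0\<close>,
  so rescaling \<open>c\<^sup>*\<close> gives a left and a right inverse of \<open>c\<close>.\<close>

lemma cstar_zero [simp]: "cstar (0::'a::cstar_algebra) = 0"
proof -
  have "cstar (0::'a) = cstar (0 + 0)" by simp
  also have "\<dots> = cstar 0 + cstar 0" by (rule cstar_add)
  finally show ?thesis by simp
qed

lemma cstar_eq_0_iff [simp]: "cstar x = 0 \<longleftrightarrow> (x::'a::cstar_algebra) = 0"
  by (metis cstar_cstar cstar_zero)

lemma trivial_centerD:
  assumes "trivial_center TYPE('a::cstar_algebra)" and "(z::'a) \<in> center"
  obtains l where "z = scaleC l 1"
  using assms unfolding trivial_center_def by auto

lemma cstar_intertwines:
  assumes "star_hom \<phi>" and "star_hom \<psi>" and "\<forall>b. \<phi> b * c = c * \<psi> b"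
  shows "cstar c * \<phi> b = \<psi> b * cstar c"
proof -
  have "\<phi> (cstar b) = cstar (\<phi> b)" "\<psi> (cstar b) = cstar (\<psi> b)"
    using assms(1,2) unfolding star_hom_def by auto
  moreover have "cstar (\<phi> (cstar b) * c) = cstar (c * \<psi> (cstar b))"
    using assms(3) by simp
  ultimately show ?thesis by (simp add: cstar_mult cstar_cstar)
qed

lemma intertwiner_product_central:
  assumes "\<forall>b. f b * c = c * g b" and "\<forall>b. d * f b = g b * d" and "surj g"
  shows "d * c \<in> center"
  unfolding center_def
proof safe
  fix x
  obtain b where x: "x = g b" using \<open>surj g\<close> by (metis surjD)
  have "d * c * g b = d * (f b * c)" using assms(1) by (simp add: mult.assoc)
  also have "\<dots> = g b * (d * c)" using assms(2) by (simp add: mult.assoc[symmetric])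
  finally show "d * c * x = x * (d * c)" using x by simp
qed

lemma scalar_nonzero_if_cstar_mult:
  fixes x :: "'a::cstar_algebra"
  assumes "cstar x * x = scaleC l 1" and "x \<noteq> 0"
  shows "l \<noteq> 0"
proof
  assume "l = 0"
  then have "norm x * norm x = 0"
    using assms(1) by (simp add: norm_scaleC flip: cstar_identity)
  with assms(2) show False by simp
qed

lemma left_inverse_cstar:
  fixes x :: "'a::cstar_algebra"
  assumes "cstar x * x = scaleC l 1" and "x \<noteq> 0"
  shows "scaleC (inverse l) (cstar x) * x = 1"
  using assms scalar_nonzero_if_cstar_mult[OF assms]
  by (simp add: mult_scaleC_left scaleC_scaleC scaleC_one)

lemma right_inverse_cstar:
  fixes x :: "'a::cstar_algebra"
  assumes "x * cstar x = scaleC l 1" and "x \<noteq> 0"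
  shows "x * scaleC (inverse l) (cstar x) = 1"
proof -
  have "cstar (cstar x) * cstar x = scaleC l 1" using assms(1) by (simp add: cstar_cstar)
  from scalar_nonzero_if_cstar_mult[OF this] assms show ?thesis
    by (simp add: mult_scaleC_right scaleC_scaleC scaleC_one)
qed

lemma invertible_elemI:
  assumes "d * c = 1" and "c * e = 1"
  shows "invertible_elem c"
proof -
  have "d = e"
    by (metis assms mult.assoc mult_1_left mult_1_right)
  with assms show ?thesis unfolding invertible_elem_def by auto
qed

theorem lemma3p1:
  fixes \<phi> \<psi> :: "'b::cstar_algebra \<Rightarrow> 'c::cstar_algebra" and c :: 'c
  assumes "star_hom \<phi>" and "surj \<phi>"
    and "star_hom \<psi>" and "surj \<psi>"
    and "trivial_center TYPE('c)"
    and "\<forall>b. \<phi> b * c = c * \<psi> b"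
  shows "invertible_elem c \<or> c = 0"
proof (cases "c = 0")
  case False
  have adj: "\<forall>b. cstar c * \<phi> b = \<psi> b * cstar c"
    using cstar_intertwines[OF assms(1,3,6)] by blast
  have "cstar c * c \<in> center"
    using intertwiner_product_central[OF assms(6) adj assms(4)] .
  then obtain l where l: "cstar c * c = scaleC l 1"
    using assms(5) trivial_centerD by blast
  have "c * cstar c \<in> center"
    using intertwiner_product_central[of \<psi> "cstar c" \<phi> c] adj assms(2,6) by simp
  then obtain m where m: "c * cstar c = scaleC m 1"
    using assms(5) trivial_centerD by blast
  show ?thesis
    using invertible_elemI[OF left_inverse_cstar[OF l False] right_inverse_cstar[OF m False]]
    by simp
qed simp

end
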